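(* Let $n\ge1$ and let $\Omega\subset\mathbb{C}^n$ be a convex domain that is Kobayashi hyperbolic. Then $\Omega$ is holomorphic homogeneous regular, i.e. $\hat\sigma_\Omega=\inf_{p\in\Omega}\sigma_\Omega(p)>0$.
   Context: For $q\in\mathbb{C}^n$ and $r>0$ let $\mathbb{B}^n(q;r)=\{z\in\mathbb{C}^n:\|z-q\|<r\}$ (Euclidean norm) and $\mathbb{B}^n=\mathbb{B}^n(0;1)$. For a complex manifold $\Omega$ of dimension $n$ and $p\in\Omega$, let $\mathcal{F}(p,\Omega)$ be the set of injective holomorphic maps $f:\Omega\to\mathbb{B}^n$ with $f(p)=0$. The squeezing function is $\sigma_\Omega(p)=\sup\{r>0:\ \mathbb{B}^n(0;r)\subset f(\Omega)\text{ for some }f\in\mathcal{F}(p,\Omega)\}$, and the squeezing constant is $\hat\sigma_\Omega=\inf_{p\in\Omega}\sigma_\Omega(p)$. $\Omega$ is called holomorphic homogeneous regular (HHR), equivalently uniformly squeezing, if $\hat\sigma_\Omega>0$. *)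

theory Defs
  imports "HOL-Analysis.Analysis"
begin

definition complex_linear_vec :: "(complex^'m \<Rightarrow> complex^'n) \<Rightarrow> bool" where
  "complex_linear_vec L \<longleftrightarrow> (\<forall>c v. L (c *s v) = c *s L v)"

definition holo_map :: "(complex^'m \<Rightarrow> complex^'n) \<Rightarrow> (complex^'m) set \<Rightarrow> bool" where
  "holo_map f U \<longleftrightarrow> (\<forall>x\<in>U. \<exists>L. (f has_derivative L) (at x) \<and> complex_linear_vec L)"

definition holo_disc :: "(complex \<Rightarrow> complex^'n) \<Rightarrow> (complex^'n) set \<Rightarrow> bool" where
  "holo_disc g \<Omega> \<longleftrightarrow> (\<forall>i. (\<lambda>z. g z $ i) holomorphic_on ball 0 1) \<and> g ` ball 0 1 \<subseteq> \<Omega>"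

definition poincare_dist :: "complex \<Rightarrow> complex \<Rightarrow> real" where
  "poincare_dist a b = artanh (cmod ((a - b) / (1 - cnj a * b)))"

definition kobayashi_chain ::
  "(complex^'n) set \<Rightarrow> complex^'n \<Rightarrow> complex^'n \<Rightarrow> ((complex \<Rightarrow> complex^'n) \<times> complex \<times> complex) list \<Rightarrow> bool" where
  "kobayashi_chain \<Omega> p q cs \<longleftrightarrow> cs \<noteq> [] \<and>
     (\<forall>(g,a,b)\<in>set cs. holo_disc g \<Omega> \<and> a \<in> ball 0 1 \<and> b \<in> ball 0 1) \<and>
     (case hd cs of (g,a,b) \<Rightarrow> g a = p) \<and>
     (case last cs of (g,a,b) \<Rightarrow> g b = q) \<and>
     (\<forall>j. Suc j < length cs \<longrightarrow>
        (case cs ! j of (g,a,b) \<Rightarrow> g b) = (case cs ! Suc j of (g,a,b) \<Rightarrow> g a))"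

definition kobayashi_pdist :: "(complex^'n) set \<Rightarrow> complex^'n \<Rightarrow> complex^'n \<Rightarrow> real" where
  "kobayashi_pdist \<Omega> p q =
     Inf {(\<Sum>(g,a,b)\<leftarrow>cs. poincare_dist a b) | cs. kobayashi_chain \<Omega> p q cs}"

definition kobayashi_hyperbolic :: "(complex^'n) set \<Rightarrow> bool" where
  "kobayashi_hyperbolic \<Omega> \<longleftrightarrow> (\<forall>p\<in>\<Omega>. \<forall>q\<in>\<Omega>. p \<noteq> q \<longrightarrow> kobayashi_pdist \<Omega> p q > 0)"

definition domain :: "(complex^'n) set \<Rightarrow> bool" where
  "domain \<Omega> \<longleftrightarrow> open \<Omega> \<and> connected \<Omega> \<and> \<Omega> \<noteq> {}"

definition squeeze_maps :: "complex^'n \<Rightarrow> (complex^'n) set \<Rightarrow> (complex^'n \<Rightarrow> complex^'n) set" where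
  "squeeze_maps p \<Omega> = {f. holo_map f \<Omega> \<and> inj_on f \<Omega> \<and> f ` \<Omega> \<subseteq> ball 0 1 \<and> f p = 0}"

definition squeezing_function :: "(complex^'n) set \<Rightarrow> complex^'n \<Rightarrow> real" where
  "squeezing_function \<Omega> p = Sup {r. r > 0 \<and> (\<exists>f\<in>squeeze_maps p \<Omega>. ball 0 r \<subseteq> f ` \<Omega>)}"

definition squeezing_constant :: "(complex^'n) set \<Rightarrow> real" where
  "squeezing_constant \<Omega> = Inf (squeezing_function \<Omega> ` \<Omega>)"

definition HHR :: "(complex^'n) set \<Rightarrow> bool" where
  "HHR \<Omega> \<longleftrightarrow> squeezing_constant \<Omega> > 0"

end

theory Submission
  imports Defs
begin

text \<open>A convex Kobayashi hyperbolic domain contains no complex line. Hence from any \<open>p \<in> \<Omega>\<close> one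
  can choose directions \<open>v\<^sub>1, \<dots>, v\<^sub>n\<close> one after another, each annihilated by the complex
  linear forms \<open>c\<^sub>1, \<dots>, c\<^sub>j\<^sub>-\<^sub>1\<close> already chosen, such that the disc \<open>p + \<bbbD> v\<^sub>j\<close> lies in \<open>\<Omega>\<close> but
  \<open>p + v\<^sub>j\<close> does not; a supporting hyperplane at \<open>p + v\<^sub>j\<close> yields \<open>c\<^sub>j\<close> with \<open>c\<^sub>j(v\<^sub>j) = 1\<close> and
  \<open>Re c\<^sub>j(z - p) < 1\<close> on \<open>\<Omega>\<close>. The matrix \<open>(c\<^sub>j(v\<^sub>k))\<close> is unit triangular with entries of modulus
  at most 1, so by convexity \<open>z \<mapsto> (c\<^sub>j(z - p))\<^sub>j\<close> maps \<open>\<Omega>\<close> injectively into a product of half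
  planes and onto a set containing a polydisc whose radius depends only on \<open>n\<close>. A Cayley
  transform of each half plane onto the disc, followed by rescaling, gives an element of
  \<open>\<F>(p, \<Omega>)\<close> whose image contains a ball of radius depending only on \<open>n\<close>.\<close>

definition lin_form :: "complex^'n \<Rightarrow> complex^'n \<Rightarrow> complex" where
  "lin_form c x = (\<Sum>i\<in>UNIV. c$i * x$i)"

lemma lin_form_add: "lin_form c (x + y) = lin_form c x + lin_form c y"
  by (simp add: lin_form_def distrib_left sum.distrib)

lemma lin_form_diff: "lin_form c (x - y) = lin_form c x - lin_form c y"
  by (simp add: lin_form_def right_diff_distrib sum_subtractf)

lemma lin_form_smult: "lin_form c (a *s x) = a * lin_form c x"
  by (simp add: lin_form_def sum_distrib_left algebra_simps)

lemma lin_form_0_right [simp]: "lin_form c 0 = 0"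
  by (simp add: lin_form_def)

lemma lin_form_smult_left: "lin_form (a *s c) x = a * lin_form c x"
  by (simp add: lin_form_def sum_distrib_left algebra_simps)

lemma lin_form_sum: "lin_form c (sum f A) = (\<Sum>j\<in>A. lin_form c (f j))"
  by (simp add: lin_form_def sum_distrib_left sum.swap[of _ A])

lemma Re_lin_form_cnj: "Re (lin_form (\<chi> i. cnj (a$i)) x) = inner a x"
  by (simp add: lin_form_def inner_vec_def inner_complex_def)

lemma bounded_linear_lin_form: "bounded_linear (lin_form c)"
  unfolding lin_form_def
  by (intro bounded_linear_sum bounded_linear_compose[OF bounded_linear_mult_right bounded_linear_vec_nth])

lemma norm_smult_vec: "norm (l *s (x::complex^'n)) = cmod l * norm x"
  unfolding norm_vec_def by (simp add: norm_mult L2_set_right_distrib)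

lemma scaleR_smult: "r *\<^sub>R (a *s x) = (complex_of_real r * a) *s (x::complex^'n)"
  unfolding vec_eq_iff vector_scaleR_component vector_smult_component by (simp add: scaleR_conv_of_real)

lemma vec_linearI:
  fixes T :: "complex^'n \<Rightarrow> complex^'m"
  assumes "\<And>x y. T (x + y) = T x + T y" "\<And>a x. T (a *s x) = a *s T x"
  shows "Vector_Spaces.linear (*s) (*s) T"
  unfolding Vector_Spaces.linear_iff by (simp add: assms vec.vector_space_axioms)

lemma obtain_enumeration:
  obtains e :: "nat \<Rightarrow> 'n::finite" and g
  where "\<And>i. g i < CARD('n)" "\<And>i. e (g i) = i" "\<And>j. j < CARD('n) \<Longrightarrow> g (e j) = j"
proof -
  obtain e :: "nat \<Rightarrow> 'n" where e: "bij_betw e {..<CARD('n)} UNIV"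
    using ex_bij_betw_nat_finite[of "UNIV::'n set"] by (auto simp: lessThan_atLeast0)
  show thesis
  proof (rule that[of "inv_into {..<CARD('n)} e" e])
    show "inv_into {..<CARD('n)} e i < CARD('n)" "e (inv_into {..<CARD('n)} e i) = i" for i
      using e inv_into_into[of i e "{..<CARD('n)}"] f_inv_into_f[of i e "{..<CARD('n)}"]
      unfolding bij_betw_def by auto
    show "inv_into {..<CARD('n)} e (e j) = j" if "j < CARD('n)" for j
      using e that unfolding bij_betw_def by simp
  qed
qed

lemma ex_common_zero_lin_forms:
  fixes c :: "nat \<Rightarrow> complex^'n"
  assumes m: "m < CARD('n)"
  shows "\<exists>u. u \<noteq> 0 \<and> (\<forall>k<m. lin_form (c k) u = 0)"
proof -
  obtain e :: "nat \<Rightarrow> 'n" and g where ge: "\<And>j. j < CARD('n) \<Longrightarrow> g (e j) = j"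
    using obtain_enumeration by metis
  define T :: "complex^'n \<Rightarrow> complex^'n" where
    "T = (\<lambda>x. \<chi> i. if g i < m then lin_form (c (g i)) x else 0)"
  have "Vector_Spaces.linear (*s) (*s) T"
    by (rule vec_linearI) (simp_all add: T_def vec_eq_iff lin_form_add lin_form_smult)
  moreover have "\<not> surj T"
  proof
    assume "surj T"
    then obtain x where "T x = axis (e m) 1" by (metis surjD)
    hence "T x $ e m = 1" by simp
    moreover have "T x $ e m = 0" using ge[OF m] by (simp add: T_def)
    ultimately show False by simp
  qed
  ultimately have "\<not> inj T" using vec.linear_inj_imp_surj by blast
  then obtain x y where xy: "x \<noteq> y" "T x = T y" unfolding inj_def by blast
  have "lin_form (c k) (x - y) = 0" if "k < m" for k
  proof -
    have "T x $ e k = T y $ e k" using xy by simp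
    thus ?thesis using ge[of k] that m by (simp add: T_def lin_form_diff)
  qed
  thus ?thesis using xy(1) by (metis right_minus_eq)
qed

lemma cmod_le_if_Re_mult_lt:
  fixes \<alpha> :: complex
  assumes "\<And>l. cmod l < 1 \<Longrightarrow> Re (l * \<alpha>) < b"
  shows "cmod \<alpha> \<le> b"
proof (rule ccontr)
  assume "\<not> cmod \<alpha> \<le> b"
  hence gt: "cmod \<alpha> > b" by simp
  have b0: "b > 0" using assms[of 0] by simp
  hence a0: "\<alpha> \<noteq> 0" using gt by auto
  define l where "l = of_real (b / cmod \<alpha> ^ 2) * cnj \<alpha>"
  have "cmod l = \<bar>b / cmod \<alpha> ^ 2\<bar> * cmod \<alpha>"
    by (simp only: l_def norm_mult norm_of_real complex_mod_cnj)
  also have "\<dots> = b / cmod \<alpha>" using gt b0 by (simp add: power2_eq_square)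
  finally have "cmod l = b / cmod \<alpha>" .
  hence "cmod l < 1" using gt b0 by (simp add: divide_less_eq)
  moreover have "Re (l * \<alpha>) = b"
  proof -
    have "l * \<alpha> = of_real (b / cmod \<alpha> ^ 2) * (cnj \<alpha> * \<alpha>)" by (simp add: l_def)
    also have "cnj \<alpha> * \<alpha> = of_real (cmod \<alpha> ^ 2)" by (metis complex_norm_square mult.commute)
    finally show ?thesis using a0 by simp
  qed
  ultimately show False using assms[of l] by simp
qed

lemma cmod_moebius_lt_1:
  assumes "cmod a < 1" "cmod b < 1"
  shows "cmod ((a - b) / (1 - cnj a * b)) < 1"
proof -
  have "cmod (1 - cnj a * b)^2 - cmod (a - b)^2 = (1 - cmod a^2) * (1 - cmod b^2)"
    unfolding cmod_power2 by (simp add: algebra_simps power2_eq_square)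
  moreover have "(1 - cmod a^2) * (1 - cmod b^2) > 0"
    using assms by (simp add: power_less_one_iff abs_less_iff)
  ultimately have "cmod (a - b)^2 < cmod (1 - cnj a * b)^2" by simp
  hence "cmod (a - b) < cmod (1 - cnj a * b)" using power2_less_imp_less by fastforce
  thus ?thesis by (simp add: norm_divide divide_less_eq)
qed

lemma poincare_dist_nonneg: "cmod a < 1 \<Longrightarrow> cmod b < 1 \<Longrightarrow> poincare_dist a b \<ge> 0"
  unfolding poincare_dist_def artanh_def using cmod_moebius_lt_1 by simp

lemma artanh_le_double:
  assumes "0 \<le> x" "x \<le> 1/2"
  shows "artanh (x::real) \<le> 2 * x"
proof -
  have "ln ((1 + x) / (1 - x)) \<le> (1 + x) / (1 - x) - 1" using assms by (intro ln_le_minus_one) auto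
  also have "\<dots> = 2 * x / (1 - x)" using assms by (simp add: field_simps)
  also have "\<dots> \<le> 4 * x"
  proof -
    have "x * (x * 2) \<le> x * 1" using assms by (intro mult_left_mono) auto
    thus ?thesis using assms by (simp add: field_simps)
  qed
  finally show ?thesis by (simp add: artanh_def)
qed

lemma kobayashi_pdist_le_chain:
  assumes "kobayashi_chain \<Omega> p q cs"
  shows "kobayashi_pdist \<Omega> p q \<le> (\<Sum>(g,a,b)\<leftarrow>cs. poincare_dist a b)"
  unfolding kobayashi_pdist_def
proof (rule cInf_lower)
  show "bdd_below {(\<Sum>(g,a,b)\<leftarrow>cs. poincare_dist a b) | cs. kobayashi_chain \<Omega> p q cs}"
  proof (rule bdd_belowI, clarify)
    fix cs' assume "kobayashi_chain \<Omega> p q cs'"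
    hence "\<forall>y\<in>set (map (\<lambda>(g,a,b). poincare_dist a b) cs'). y \<ge> 0"
      unfolding kobayashi_chain_def by (auto intro!: poincare_dist_nonneg)
    thus "0 \<le> (\<Sum>(g,a,b)\<leftarrow>cs'. poincare_dist a b)" by (metis sum_list_nonneg)
  qed
qed (use assms in blast)

text \<open>A complex line through \<open>p\<close> contains discs of every radius, so the distance from \<open>p\<close>
  to \<open>p + u\<close> would be at most \<open>artanh (1/R) \<le> 2/R\<close> for every large \<open>R\<close>.\<close>

lemma kobayashi_hyperbolic_no_complex_line:
  fixes \<Omega> :: "(complex^'n) set"
  assumes hyp: "kobayashi_hyperbolic \<Omega>" and p: "p \<in> \<Omega>" and u: "u \<noteq> 0"
  shows "\<exists>l. p + l *s u \<notin> \<Omega>"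
proof (rule ccontr)
  assume "\<nexists>l. p + l *s u \<notin> \<Omega>"
  hence line: "\<And>l. p + l *s u \<in> \<Omega>" by blast
  define d where "d = kobayashi_pdist \<Omega> p (p + u)"
  have d: "d > 0"
    using hyp p line[of 1] u unfolding kobayashi_hyperbolic_def d_def by simp
  define R :: real where "R = 2 + 4 / d"
  have R2: "R \<ge> 2" using d by (simp add: R_def)
  have "4 < R * d" using d by (simp add: R_def distrib_right)
  hence Rd: "2 / R < d" using R2 by (simp add: divide_less_eq mult.commute)
  define g where "g = (\<lambda>z. p + (of_real R * z) *s u)"
  have "holo_disc g \<Omega>"
    unfolding holo_disc_def g_def using line by (auto intro!: holomorphic_intros)
  hence "kobayashi_chain \<Omega> p (p + u) [(g, 0, complex_of_real (1/R))]"
    unfolding kobayashi_chain_def using R2 by (auto simp: g_def norm_divide)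
  hence "d \<le> artanh (1/R)"
    using kobayashi_pdist_le_chain R2 by (fastforce simp: d_def poincare_dist_def norm_divide)
  also have "\<dots> \<le> 2 / R" using R2 artanh_le_double[of "1/R"] by simp
  finally show False using Rd by simp
qed

lemma ex_exit_direction_with_disc:
  fixes \<Omega> W :: "(complex^'n) set"
  assumes "open \<Omega>" "p \<in> \<Omega>" "closed W" "\<And>l x. x \<in> W \<Longrightarrow> l *s x \<in> W"
    and "u \<in> W" "p + u \<notin> \<Omega>"
  obtains v where "v \<in> W" "p + v \<notin> \<Omega>" "\<And>l. cmod l < 1 \<Longrightarrow> p + l *s v \<in> \<Omega>"
proof -
  define Z where "Z = W \<inter> (\<lambda>x. p + x) -` (- \<Omega>)"
  have "closed Z"
    unfolding Z_def using assms(1,3) by (intro closed_Int continuous_closed_vimage continuous_intros) auto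
  moreover have "u \<in> Z" using assms(5,6) by (simp add: Z_def)
  ultimately obtain v where v: "v \<in> Z" and nearest: "\<And>y. y \<in> Z \<Longrightarrow> dist 0 v \<le> dist 0 y"
    using distance_attains_inf by blast
  have "v \<noteq> 0" using v assms(2) by (auto simp: Z_def)
  have "p + l *s v \<in> \<Omega>" if "cmod l < 1" for l
  proof (rule ccontr)
    assume "p + l *s v \<notin> \<Omega>"
    hence "l *s v \<in> Z" using v assms(4) by (simp add: Z_def)
    hence "norm v \<le> cmod l * norm v" using nearest[of "l *s v"] by (simp add: norm_smult_vec)
    thus False using that \<open>v \<noteq> 0\<close> by simp
  qed
  with v show thesis by (intro that) (auto simp: Z_def)
qed

lemma open_convex_strict_separation:
  fixes \<Omega> :: "'a::euclidean_space set"
  assumes "open \<Omega>" "convex \<Omega>" "\<Omega> \<noteq> {}" "q \<notin> \<Omega>"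
  obtains a b where "\<And>x. x \<in> \<Omega> \<Longrightarrow> inner a x < b" "b \<le> inner a q"
proof -
  obtain a b where ab: "a \<noteq> 0" "\<forall>x\<in>\<Omega>. inner a x \<le> b" "\<forall>x\<in>{q}. inner a x \<ge> b"
    using separating_hyperplane_sets[of \<Omega> "{q}"] assms(2-4) by auto
  have "inner a x < b" if x: "x \<in> \<Omega>" for x
  proof -
    obtain e where e: "e > 0" "ball x e \<subseteq> \<Omega>" using assms(1) x by (meson open_contains_ball)
    define y where "y = x + (e / (2 * norm a)) *\<^sub>R a"
    have "y \<in> \<Omega>" using e ab(1) by (intro subsetD[OF e(2)]) (simp add: y_def dist_norm)
    moreover have "inner a y = inner a x + e / 2 * norm a"
      using ab(1) by (simp add: y_def inner_add_right power2_norm_eq_inner[symmetric] power2_eq_square)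
    moreover have "e / 2 * norm a > 0" using e(1) ab(1) by simp
    ultimately show ?thesis using ab(2) by fastforce
  qed
  with ab(3) show thesis by (intro that) auto
qed

text \<open>The real supporting hyperplane \<open>inner a x = b\<close> at \<open>p + v\<close> is made complex by the disc
  \<open>p + l *s v\<close>: along it the complex form \<open>\<alpha> = lin_form a' v\<close> satisfies \<open>cmod \<alpha> \<le> Re \<alpha>\<close>,
  so \<open>\<alpha>\<close> is real and positive and can be normalised to \<open>1\<close>.\<close>

lemma supporting_lin_form:
  fixes \<Omega> :: "(complex^'n) set"
  assumes "open \<Omega>" "convex \<Omega>" "p + v \<notin> \<Omega>" and disc: "\<And>l. cmod l < 1 \<Longrightarrow> p + l *s v \<in> \<Omega>"
  obtains c where "lin_form c v = 1" "\<And>z. z \<in> \<Omega> \<Longrightarrow> Re (lin_form c (z - p)) < 1"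
proof -
  have "\<Omega> \<noteq> {}" using disc[of 0] by auto
  then obtain a b where sep: "\<And>x. x \<in> \<Omega> \<Longrightarrow> inner a x < b" "b \<le> inner a (p + v)"
    using open_convex_strict_separation assms(1-3) by blast
  define a' where "a' = (\<chi> i. cnj (a$i))"
  have Re_a': "Re (lin_form a' x) = inner a x" for x unfolding a'_def by (rule Re_lin_form_cnj)
  define \<alpha> where "\<alpha> = lin_form a' v"
  define \<beta> where "\<beta> = Re (lin_form a' p)"
  have "Re (l * \<alpha>) < b - \<beta>" if "cmod l < 1" for l
    using sep(1)[OF disc[OF that]] by (simp add: \<alpha>_def \<beta>_def lin_form_add lin_form_smult Re_a'[symmetric])
  hence "cmod \<alpha> \<le> b - \<beta>" by (rule cmod_le_if_Re_mult_lt)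
  moreover have "b - \<beta> \<le> Re \<alpha>"
    using sep(2) by (simp add: \<alpha>_def \<beta>_def lin_form_add Re_a'[symmetric])
  moreover have "Re \<alpha> \<le> cmod \<alpha>" by (rule complex_Re_le_cmod)
  ultimately have "cmod \<alpha> = Re \<alpha>" "Re \<alpha> = b - \<beta>" by linarith+
  moreover from this have "Im \<alpha> = 0" using cmod_power2[of \<alpha>] by simp
  ultimately have \<alpha>_real: "\<alpha> = of_real (b - \<beta>)" by (simp add: complex_eq_iff)
  have pos: "b - \<beta> > 0" using sep(1)[OF disc[of 0]] by (simp add: \<beta>_def Re_a'[symmetric])
  define c where "c = (1 / \<alpha>) *s a'"
  have "lin_form c v = 1" using pos by (simp add: c_def lin_form_smult_left \<alpha>_def[symmetric] \<alpha>_real)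
  moreover have "Re (lin_form c (z - p)) < 1" if "z \<in> \<Omega>" for z
  proof -
    have "Re (lin_form c (z - p)) = (inner a z - \<beta>) / (b - \<beta>)"
      by (simp add: c_def lin_form_smult_left lin_form_diff \<alpha>_real \<beta>_def Re_a'[symmetric]
          Re_divide_of_real diff_divide_distrib flip: divide_complex_def)
    thus ?thesis using sep(1)[OF that] pos by (simp add: divide_less_eq)
  qed
  ultimately show thesis by (rule that)
qed

definition support_frame ::
  "(complex^'n) set \<Rightarrow> complex^'n \<Rightarrow> nat \<Rightarrow> (nat \<Rightarrow> complex^'n) \<Rightarrow> (nat \<Rightarrow> complex^'n) \<Rightarrow> bool" where
  "support_frame \<Omega> p m v c \<longleftrightarrow> (\<forall>j<m.
     (\<forall>l. cmod l < 1 \<longrightarrow> p + l *s v j \<in> \<Omega>) \<and> (\<forall>z\<in>\<Omega>. Re (lin_form (c j) (z - p)) < 1) \<and>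
     lin_form (c j) (v j) = 1 \<and> (\<forall>k<j. lin_form (c k) (v j) = 0))"

lemma ex_support_frame:
  fixes \<Omega> :: "(complex^'n) set"
  assumes "open \<Omega>" "convex \<Omega>" "kobayashi_hyperbolic \<Omega>" "p \<in> \<Omega>" "m \<le> CARD('n)"
  shows "\<exists>v c. support_frame \<Omega> p m v c"
  using assms(5)
proof (induction m)
  case 0
  show ?case by (simp add: support_frame_def)
next
  case (Suc m)
  then obtain v c where frame: "support_frame \<Omega> p m v c" by auto
  define W where "W = {x. \<forall>k<m. lin_form (c k) x = 0}"
  have "closed {x. lin_form (c k) x = 0}" for k
    using bounded_linear_lin_form by (intro closed_Collect_eq linear_continuous_on continuous_on_const)
  hence "closed W" unfolding W_def by (intro closed_Collect_all closed_Collect_imp) auto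
  moreover have "\<And>l x. x \<in> W \<Longrightarrow> l *s x \<in> W" by (simp add: W_def lin_form_smult)
  moreover obtain u where "u \<noteq> 0" "u \<in> W"
    using ex_common_zero_lin_forms[of m c] Suc.prems unfolding W_def by auto
  moreover obtain l where "p + l *s u \<notin> \<Omega>"
    using kobayashi_hyperbolic_no_complex_line assms(3,4) \<open>u \<noteq> 0\<close> by blast
  ultimately obtain v' where v': "v' \<in> W" "p + v' \<notin> \<Omega>" "\<And>l. cmod l < 1 \<Longrightarrow> p + l *s v' \<in> \<Omega>"
    using ex_exit_direction_with_disc[OF assms(1,4), of W "l *s u"] by blast
  obtain c' where "lin_form c' v' = 1" "\<And>z. z \<in> \<Omega> \<Longrightarrow> Re (lin_form c' (z - p)) < 1"
    using supporting_lin_form[OF assms(1,2) v'(2,3)] by blast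
  with frame v'(1,3) have "support_frame \<Omega> p (Suc m) (v(m := v')) (c(m := c'))"
    unfolding support_frame_def W_def by (simp add: less_Suc_eq)
  thus ?case by blast
qed

lemma support_frame_entry_bound:
  assumes "support_frame \<Omega> p m v c" "j < m" "k < m"
  shows "cmod (lin_form (c j) (v k)) \<le> 1"
proof (rule cmod_le_if_Re_mult_lt)
  fix l :: complex assume "cmod l < 1"
  hence "Re (lin_form (c j) (p + l *s v k - p)) < 1"
    using assms unfolding support_frame_def by blast
  thus "Re (l * lin_form (c j) (v k)) < 1" by (simp add: lin_form_smult)
qed

lemma unit_lower_triangular_solve:
  fixes M :: "nat \<Rightarrow> nat \<Rightarrow> complex" and w :: "nat \<Rightarrow> complex"
  assumes "\<And>j k. j < n \<Longrightarrow> k < n \<Longrightarrow> cmod (M j k) \<le> 1" "\<And>j. j < n \<Longrightarrow> M j j = 1"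
    and "\<And>j. j < n \<Longrightarrow> cmod (w j) \<le> \<delta>" "m \<le> n"
  shows "\<exists>y. \<forall>j<m. (\<Sum>k\<le>j. M j k * y k) = w j \<and> cmod (y j) \<le> 2^j * \<delta>"
  using assms(4)
proof (induction m)
  case 0
  show ?case by simp
next
  case (Suc m)
  then obtain y where y: "\<forall>j<m. (\<Sum>k\<le>j. M j k * y k) = w j \<and> cmod (y j) \<le> 2^j * \<delta>" by auto
  have mn: "m < n" using Suc.prems by simp
  define y' where "y' = y(m := w m - (\<Sum>k<m. M m k * y k))"
  have same: "(\<Sum>k<j. M i k * y' k) = (\<Sum>k<j. M i k * y k)" if "j \<le> m" for i j
    using that by (intro sum.cong) (auto simp: y'_def)
  have eq_m: "(\<Sum>k\<le>m. M m k * y' k) = w m"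
    using same[of m] assms(2)[OF mn] by (simp add: lessThan_Suc_atMost[symmetric] y'_def)
  have bound_m: "cmod (y' m) \<le> 2^m * \<delta>"
  proof -
    have "cmod (y' m) \<le> cmod (w m) + cmod (\<Sum>k<m. M m k * y k)"
      by (simp add: y'_def norm_triangle_ineq4)
    also have "\<dots> \<le> cmod (w m) + (\<Sum>k<m. cmod (M m k) * cmod (y k))"
      using norm_sum[of "\<lambda>k. M m k * y k" "{..<m}"] by (simp add: norm_mult)
    also have "\<dots> \<le> \<delta> + (\<Sum>k<m. 1 * (2^k * \<delta>))"
      using assms(1,3) mn y by (intro add_mono sum_mono mult_mono) auto
    also have "(\<Sum>k<m. 1 * (2^k * \<delta>)) = (2^m - 1) * \<delta>"
      by (induction m) (simp_all add: algebra_simps)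
    finally show ?thesis by (simp add: algebra_simps)
  qed
  have "(\<Sum>k\<le>j. M j k * y' k) = w j \<and> cmod (y' j) \<le> 2^j * \<delta>" if "j < Suc m" for j
  proof (cases "j = m")
    case True
    with eq_m bound_m show ?thesis by simp
  next
    case False
    with that have "j < m" by simp
    moreover from this have "(\<Sum>k\<le>j. M j k * y' k) = (\<Sum>k\<le>j. M j k * y k)"
      using same[of "Suc j" j] by (simp add: lessThan_Suc_atMost)
    moreover have "y' j = y j" using \<open>j < m\<close> by (simp add: y'_def)
    ultimately show ?thesis using y[rule_format, OF \<open>j < m\<close>] by simp
  qed
  then show ?case by (auto intro!: exI[of _ y'])
qed

lemma mean_of_scaled_translates:
  fixes p :: "complex^'n"
  assumes "N > 0"
  shows "(\<Sum>k<N. (1 / real N) *\<^sub>R (p + (of_nat N * y k) *s v k)) = p + (\<Sum>k<N. y k *s v k)"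
proof -
  have "complex_of_real (1 / real N) * (of_nat N * y k) = y k" for k
    using assms by simp
  hence "(1 / real N) *\<^sub>R (p + (of_nat N * y k) *s v k) = (1 / real N) *\<^sub>R p + y k *s v k" for k
    by (simp add: scaleR_add_right scaleR_smult)
  hence "(\<Sum>k<N. (1 / real N) *\<^sub>R (p + (of_nat N * y k) *s v k))
      = (\<Sum>k<N. (1 / real N) *\<^sub>R p) + (\<Sum>k<N. y k *s v k)"
    by (simp add: sum.distrib)
  also have "(\<Sum>k<N. (1 / real N) *\<^sub>R p) = (\<Sum>k<N. 1 / real N) *\<^sub>R p"
    by (rule scaleR_sum_left[symmetric])
  also have "\<dots> = p" using assms by simp
  finally show ?thesis .
qed

text \<open>\<open>p + x\<close> is the barycentre of the points \<open>p + (N * y k) *s v k\<close>, which lie in the unit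
  discs of the frame because the triangular solution satisfies \<open>cmod (y k) \<le> 2^k * \<delta>\<close>.\<close>

lemma support_frame_polydisc:
  fixes \<Omega> :: "(complex^'n) set"
  assumes "convex \<Omega>" and frame: "support_frame \<Omega> p N v c" and "N > 0"
    and w: "\<And>j. j < N \<Longrightarrow> cmod (w j) \<le> 1 / (2 * real N * 2 ^ N)"
  shows "\<exists>x. p + x \<in> \<Omega> \<and> (\<forall>j<N. lin_form (c j) x = w j)"
proof -
  define \<delta> :: real where "\<delta> = 1 / (2 * real N * 2 ^ N)"
  have "\<delta> > 0" using \<open>N > 0\<close> by (simp add: \<delta>_def)
  define M where "M = (\<lambda>j k. lin_form (c j) (v k))"
  have upper_zero: "M j k = 0" if "j < k" "k < N" for j k
    using frame that unfolding support_frame_def M_def by blast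
  obtain y where y: "\<forall>j<N. (\<Sum>k\<le>j. M j k * y k) = w j \<and> cmod (y j) \<le> 2^j * \<delta>"
    using unit_lower_triangular_solve[of N M w \<delta> N] support_frame_entry_bound[OF frame] frame w
    unfolding M_def support_frame_def \<delta>_def by blast
  define x where "x = (\<Sum>k<N. y k *s v k)"
  have "lin_form (c j) x = w j" if j: "j < N" for j
  proof -
    have "lin_form (c j) x = (\<Sum>k<N. M j k * y k)"
      by (simp add: x_def lin_form_sum lin_form_smult M_def mult.commute)
    also have "\<dots> = (\<Sum>k\<le>j. M j k * y k)"
      using j upper_zero by (intro sum.mono_neutral_right) auto
    finally show ?thesis using y j by simp
  qed
  moreover have "p + x \<in> \<Omega>"
  proof -
    have "p + (of_nat N * y k) *s v k \<in> \<Omega>" if k: "k < N" for k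
    proof -
      have "cmod (y k) \<le> 2^k * \<delta>" using y k by blast
      also have "\<dots> \<le> 2^N * \<delta>" using k \<open>\<delta> > 0\<close> by (intro mult_right_mono power_increasing) auto
      finally have "cmod (of_nat N * y k) \<le> real N * (2^N * \<delta>)"
        by (simp add: norm_mult mult_left_mono)
      also have "\<dots> < 1" using \<open>N > 0\<close> by (simp add: \<delta>_def)
      finally show ?thesis using frame k unfolding support_frame_def by blast
    qed
    hence "(\<Sum>k<N. (1 / real N) *\<^sub>R (p + (of_nat N * y k) *s v k)) \<in> \<Omega>"
      using \<open>N > 0\<close> by (intro convex_sum[OF _ \<open>convex \<Omega>\<close>]) auto
    moreover have "(\<Sum>k<N. (1 / real N) *\<^sub>R (p + (of_nat N * y k) *s v k)) = p + x"
      unfolding x_def using \<open>N > 0\<close> by (rule mean_of_scaled_translates)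
    ultimately show ?thesis by simp
  qed
  ultimately show ?thesis by blast
qed

text \<open>A Cayley transform from the half plane \<open>Re u < 1\<close> onto the unit disc; its inverse is
  \<open>t \<mapsto> 2 * t / (1 + t)\<close>.\<close>

definition half_plane_to_disc :: "complex \<Rightarrow> complex" where
  "half_plane_to_disc u = u / (2 - u)"

lemma cmod_half_plane_to_disc_lt_1:
  assumes "Re u < 1"
  shows "cmod (half_plane_to_disc u) < 1"
proof -
  have "cmod (2 - u)^2 - cmod u^2 = 4 - 4 * Re u"
    unfolding cmod_power2 by (simp add: power2_eq_square algebra_simps)
  hence "cmod u^2 < cmod (2 - u)^2" using assms by simp
  hence "cmod u < cmod (2 - u)" using power2_less_imp_less by fastforce
  thus ?thesis by (simp add: half_plane_to_disc_def norm_divide divide_less_eq)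
qed

lemma inj_on_half_plane_to_disc: "inj_on half_plane_to_disc {u. Re u < 1}"
proof (rule inj_onI)
  fix u u' assume "u \<in> {u. Re u < 1}" "u' \<in> {u. Re u < 1}" "half_plane_to_disc u = half_plane_to_disc u'"
  moreover from this have "2 - u \<noteq> 0" "2 - u' \<noteq> 0" by auto
  ultimately have "u * (2 - u') = u' * (2 - u)" by (simp add: half_plane_to_disc_def field_simps)
  thus "u = u'" by (simp add: algebra_simps)
qed

lemma half_plane_to_disc_inverse:
  assumes "1 + t \<noteq> 0"
  shows "half_plane_to_disc (2 * t / (1 + t)) = t"
proof -
  have "2 - 2 * t / (1 + t) = 2 / (1 + t)" using assms by (simp add: field_simps)
  thus ?thesis using assms by (simp add: half_plane_to_disc_def divide_simps)
qed

lemma cmod_disc_to_half_plane_le: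
  assumes "cmod t \<le> 1/2"
  shows "cmod (2 * t / (1 + t)) \<le> 4 * cmod t"
proof -
  have "cmod (1 + t) \<ge> 1/2" using norm_triangle_ineq2[of 1 "-t"] assms by simp
  hence "2 * cmod t / cmod (1 + t) \<le> 2 * cmod t / (1/2)" by (intro divide_left_mono) auto
  thus ?thesis by (simp add: norm_divide norm_mult)
qed

lemma field_differentiable_half_plane_to_disc:
  "Re u < 1 \<Longrightarrow> half_plane_to_disc field_differentiable at u"
  unfolding half_plane_to_disc_def
  by (intro field_differentiable_divide field_differentiable_diff field_differentiable_const
      field_differentiable_ident) auto

lemma bounded_linear_axis: "bounded_linear (\<lambda>c::complex. axis i c :: complex^'n)"
proof (rule bounded_linear_intro[of _ 1])
  show "(axis i (x + y) :: complex^'n) = axis i x + axis i y" for x y :: complex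
    by (simp add: vec_eq_iff axis_def)
  show "(axis i (r *\<^sub>R x) :: complex^'n) = r *\<^sub>R axis i x" for r and x :: complex
    by (simp add: vec_eq_iff axis_def)
  show "norm (axis i x :: complex^'n) \<le> norm x * 1" for x
    unfolding norm_vec_def axis_def L2_set_def
    by (simp add: if_distrib[of "\<lambda>t. (norm t)^2"] cong: if_cong)
qed

lemma has_derivative_vec_lambda:
  fixes \<phi> :: "'n::finite \<Rightarrow> 'a::real_normed_vector \<Rightarrow> complex"
  assumes "\<And>i. (\<phi> i has_derivative \<phi>' i) F"
  shows "((\<lambda>x. \<chi> i. \<phi> i x) has_derivative (\<lambda>v. \<chi> i. \<phi>' i v)) F"
proof -
  have "(\<chi> i. a i) = (\<Sum>i\<in>UNIV. axis i (a i))" for a :: "'n \<Rightarrow> complex"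
    by (simp add: vec_eq_iff axis_def)
  moreover have "((\<lambda>x. \<Sum>i\<in>UNIV. axis i (\<phi> i x)) has_derivative (\<lambda>v. \<Sum>i\<in>UNIV. axis i (\<phi>' i v))) F"
    by (intro has_derivative_sum bounded_linear.has_derivative[OF bounded_linear_axis] assms)
  ultimately show ?thesis by simp
qed

lemma holo_map_compose_lin_forms:
  fixes C :: "'n \<Rightarrow> complex^'n"
  assumes "\<And>i x. x \<in> U \<Longrightarrow> \<phi> field_differentiable at (lin_form (C i) (x - p))"
  shows "holo_map (\<lambda>x. \<chi> i. \<phi> (lin_form (C i) (x - p))) U"
  unfolding holo_map_def
proof
  fix x assume "x \<in> U"
  define L where "L = (\<lambda>w. \<chi> i. deriv \<phi> (lin_form (C i) (x - p)) * lin_form (C i) w)"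
  have "((\<lambda>z. lin_form (C i) (z - p)) has_derivative lin_form (C i)) (at x)" for i
    using bounded_linear.has_derivative[OF bounded_linear_lin_form has_derivative_diff[OF
        has_derivative_ident has_derivative_const]]
    by (simp add: lin_form_diff)
  moreover have "(\<phi> has_derivative (*) (deriv \<phi> (lin_form (C i) (x - p)))) (at (lin_form (C i) (x - p)))" for i
    using assms[OF \<open>x \<in> U\<close>] by (simp add: field_differentiable_derivI has_field_derivative_imp_has_derivative)
  ultimately have "((\<lambda>x. \<chi> i. \<phi> (lin_form (C i) (x - p))) has_derivative L) (at x)"
    unfolding L_def by (rule has_derivative_vec_lambda[OF has_derivative_compose])
  moreover have "complex_linear_vec L"
    unfolding complex_linear_vec_def L_def by (simp add: vec_eq_iff lin_form_smult algebra_simps)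
  ultimately show "\<exists>L. ((\<lambda>x. \<chi> i. \<phi> (lin_form (C i) (x - p))) has_derivative L) (at x) \<and> complex_linear_vec L"
    by blast
qed

lemma norm_lt_if_components_lt:
  fixes y :: "'a::real_normed_vector^'n"
  assumes "\<And>i. norm (y $ i) < r / sqrt CARD('n)"
  shows "norm y < r"
proof -
  have "r / sqrt CARD('n) > 0" using assms[of undefined] norm_ge_zero[of "y $ undefined"] by linarith
  hence "norm (y $ i)^2 < (r / sqrt CARD('n))^2" for i using assms[of i] by (simp add: power_strict_mono)
  hence "(\<Sum>i\<in>UNIV. norm (y $ i)^2) < (\<Sum>i\<in>(UNIV::'n set). (r / sqrt CARD('n))^2)"
    by (intro sum_strict_mono) auto
  also have "\<dots> = r^2" by (simp add: power_divide)
  finally have "sqrt (\<Sum>i\<in>UNIV. norm (y $ i)^2) < sqrt (r^2)" by (rule real_sqrt_less_mono)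
  moreover have "r > 0" using \<open>r / sqrt CARD('n) > 0\<close> by (simp add: zero_less_divide_iff)
  ultimately show ?thesis by (simp add: norm_vec_def L2_set_def)
qed

lemma inj_lin_forms_if_polydisc_in_range:
  fixes C :: "'n \<Rightarrow> complex^'n"
  assumes "\<delta> > 0" and range: "\<And>w. (\<And>i. cmod (w $ i) \<le> \<delta>) \<Longrightarrow> \<exists>x. \<forall>i. lin_form (C i) x = w $ i"
  shows "inj (\<lambda>x. \<chi> i. lin_form (C i) x)"
proof (rule vec.linear_surj_imp_inj)
  show "Vector_Spaces.linear (*s) (*s) (\<lambda>x. \<chi> i. lin_form (C i) x)"
    by (rule vec_linearI) (simp_all add: vec_eq_iff lin_form_add lin_form_smult)
  have "w \<in> range (\<lambda>x. \<chi> i. lin_form (C i) x)" for w :: "complex^'n"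
  proof -
    define t where "t = \<delta> / (norm w + 1)"
    have "norm w + 1 > 0" using norm_ge_zero[of w] by linarith
    hence "t > 0" using \<open>\<delta> > 0\<close> by (simp add: t_def)
    have "cmod ((complex_of_real t *s w) $ i) \<le> \<delta>" for i
    proof -
      have "cmod ((complex_of_real t *s w) $ i) \<le> t * (norm w + 1)"
        using \<open>t > 0\<close> Finite_Cartesian_Product.norm_nth_le[of w i] by (simp add: norm_mult)
      also have "\<dots> = \<delta>" using \<open>norm w + 1 > 0\<close> by (simp add: t_def)
      finally show ?thesis .
    qed
    then obtain x where "\<forall>i. lin_form (C i) x = (complex_of_real t *s w) $ i" using range by blast
    hence "(\<chi> i. lin_form (C i) ((1 / complex_of_real t) *s x)) = w"
      using \<open>t > 0\<close> by (simp add: vec_eq_iff lin_form_smult)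
    thus ?thesis by (metis rangeI)
  qed
  thus "surj (\<lambda>x. \<chi> i. lin_form (C i) x)" by blast
qed

definition half_plane_squeeze :: "('n \<Rightarrow> complex^'n) \<Rightarrow> complex^'n \<Rightarrow> complex^'n \<Rightarrow> complex^'n" where
  "half_plane_squeeze C p z =
     (\<chi> i. complex_of_real (1 / sqrt CARD('n)) * half_plane_to_disc (lin_form (C i) (z - p)))"

lemma half_plane_squeeze_in_squeeze_maps:
  fixes C :: "'n \<Rightarrow> complex^'n"
  assumes half_planes: "\<And>i z. z \<in> \<Omega> \<Longrightarrow> Re (lin_form (C i) (z - p)) < 1"
    and inj: "inj (\<lambda>x. \<chi> i. lin_form (C i) x)"
  shows "half_plane_squeeze C p \<in> squeeze_maps p \<Omega>"
proof -
  have "holo_map (half_plane_squeeze C p) \<Omega>"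
    unfolding half_plane_squeeze_def using half_planes
    by (intro holo_map_compose_lin_forms field_differentiable_mult field_differentiable_const
        field_differentiable_half_plane_to_disc)
  moreover have "inj_on (half_plane_squeeze C p) \<Omega>"
  proof (rule inj_onI)
    fix z z' assume z: "z \<in> \<Omega>" "z' \<in> \<Omega>" "half_plane_squeeze C p z = half_plane_squeeze C p z'"
    have "lin_form (C i) (z - p) = lin_form (C i) (z' - p)" for i
    proof (rule inj_onD[OF inj_on_half_plane_to_disc])
      show "lin_form (C i) (z - p) \<in> {u. Re u < 1}" "lin_form (C i) (z' - p) \<in> {u. Re u < 1}"
        using half_planes z(1,2) by auto
      show "half_plane_to_disc (lin_form (C i) (z - p)) = half_plane_to_disc (lin_form (C i) (z' - p))"
        using arg_cong[OF z(3), of "\<lambda>y. y $ i"] by (simp add: half_plane_squeeze_def)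
    qed
    hence "(\<chi> i. lin_form (C i) (z - p)) = (\<chi> i. lin_form (C i) (z' - p))" by simp
    thus "z = z'" using injD[OF inj] by fastforce
  qed
  moreover have "half_plane_squeeze C p z \<in> ball 0 1" if "z \<in> \<Omega>" for z
  proof -
    have "cmod (half_plane_squeeze C p z $ i) = cmod (half_plane_to_disc (lin_form (C i) (z - p))) / sqrt CARD('n)"
      for i by (simp add: half_plane_squeeze_def norm_divide)
    hence "cmod (half_plane_squeeze C p z $ i) < 1 / sqrt CARD('n)" for i
      using cmod_half_plane_to_disc_lt_1[OF half_planes[OF that]] by (simp add: divide_strict_right_mono)
    thus ?thesis using norm_lt_if_components_lt by fastforce
  qed
  moreover have "half_plane_squeeze C p p = 0"
    by (simp add: half_plane_squeeze_def half_plane_to_disc_def vec_eq_iff)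
  ultimately show ?thesis unfolding squeeze_maps_def by blast
qed

lemma ball_subset_half_plane_squeeze_image:
  fixes C :: "'n \<Rightarrow> complex^'n"
  assumes polydisc: "\<And>w. (\<And>i. cmod (w $ i) \<le> \<delta>) \<Longrightarrow> \<exists>x. p + x \<in> \<Omega> \<and> (\<forall>i. lin_form (C i) x = w $ i)"
    and "\<delta> \<le> 1/2"
  shows "ball 0 (\<delta> / (4 * sqrt CARD('n))) \<subseteq> half_plane_squeeze C p ` \<Omega>"
proof
  fix y :: "complex^'n" assume "y \<in> ball 0 (\<delta> / (4 * sqrt CARD('n)))"
  hence y: "norm y * sqrt CARD('n) < \<delta> / 4" by (simp add: divide_simps mult.commute)
  define t where "t = (\<lambda>i. complex_of_real (sqrt CARD('n)) * y $ i)"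
  have t: "cmod (t i) < \<delta> / 4" for i
  proof -
    have "cmod (t i) \<le> sqrt CARD('n) * norm y"
      using Finite_Cartesian_Product.norm_nth_le[of y i] by (simp add: t_def norm_mult mult_left_mono)
    thus ?thesis using y by (simp add: mult.commute)
  qed
  have t_half: "cmod (t i) \<le> 1/2" for i using t[of i] \<open>\<delta> \<le> 1/2\<close> by linarith
  have t_ne: "1 + t i \<noteq> 0" for i
  proof
    assume "1 + t i = 0"
    hence "t i = -1" by (simp add: add_eq_0_iff)
    thus False using t_half[of i] by simp
  qed
  have "cmod (2 * t i / (1 + t i)) \<le> \<delta>" for i
    using cmod_disc_to_half_plane_le[OF t_half, of i] t[of i] by linarith
  then obtain x where x: "p + x \<in> \<Omega>" "\<forall>i. lin_form (C i) x = 2 * t i / (1 + t i)"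
    using polydisc[of "\<chi> i. 2 * t i / (1 + t i)"] by auto
  have "half_plane_squeeze C p (p + x) = y"
    using x(2) t_ne by (simp add: half_plane_squeeze_def vec_eq_iff half_plane_to_disc_inverse t_def)
  thus "y \<in> half_plane_squeeze C p ` \<Omega>" using x(1) by (metis imageI)
qed

lemma convex_hyperbolic_uniform_squeeze:
  fixes \<Omega> :: "(complex^'n) set"
  assumes "open \<Omega>" "convex \<Omega>" "kobayashi_hyperbolic \<Omega>" "p \<in> \<Omega>"
  defines "\<delta> \<equiv> 1 / (2 * real CARD('n) * 2 ^ CARD('n))"
  shows "\<exists>f\<in>squeeze_maps p \<Omega>. ball 0 (\<delta> / (4 * sqrt CARD('n))) \<subseteq> f ` \<Omega>"
proof -
  define N where "N = CARD('n)"
  obtain v c where frame: "support_frame \<Omega> p N v c"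
    using ex_support_frame[OF assms(1-4)] unfolding N_def by blast
  obtain e :: "nat \<Rightarrow> 'n" and g where g: "\<And>i. g i < N" "\<And>i. e (g i) = i"
    using obtain_enumeration unfolding N_def by metis
  define C where "C i = c (g i)" for i
  have half_planes: "Re (lin_form (C i) (z - p)) < 1" if "z \<in> \<Omega>" for i z
    using frame g(1) that unfolding support_frame_def C_def by blast
  have polydisc: "\<exists>x. p + x \<in> \<Omega> \<and> (\<forall>i. lin_form (C i) x = w $ i)"
    if "\<And>i. cmod (w $ i) \<le> \<delta>" for w
  proof -
    have "cmod (w $ e j) \<le> 1 / (2 * real N * 2 ^ N)" for j
      using that[of "e j"] unfolding \<delta>_def N_def .
    then obtain x where "p + x \<in> \<Omega>" "\<forall>j<N. lin_form (c j) x = w $ e j"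
      using support_frame_polydisc[OF assms(2) frame, of "\<lambda>j. w $ e j"] by (auto simp: N_def)
    thus ?thesis using g unfolding C_def by metis
  qed
  have "(1::real) \<le> real CARD('n) * 2 ^ CARD('n)"
    using mult_mono[of 1 "real CARD('n)" 1 "2 ^ CARD('n)"] one_le_power[of "2::real" "CARD('n)"]
    by (simp add: Suc_le_eq)
  hence "\<delta> > 0" "\<delta> \<le> 1/2" by (auto simp: \<delta>_def field_simps)
  have "inj (\<lambda>x. \<chi> i. lin_form (C i) x)"
    by (rule inj_lin_forms_if_polydisc_in_range[OF \<open>\<delta> > 0\<close>]) (use polydisc in blast)
  hence "half_plane_squeeze C p \<in> squeeze_maps p \<Omega>"
    using half_plane_squeeze_in_squeeze_maps half_planes by blast
  moreover have "ball 0 (\<delta> / (4 * sqrt CARD('n))) \<subseteq> half_plane_squeeze C p ` \<Omega>"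
    using ball_subset_half_plane_squeeze_image[OF polydisc \<open>\<delta> \<le> 1/2\<close>] by blast
  ultimately show ?thesis by blast
qed

lemma squeezing_function_ge:
  fixes \<Omega> :: "(complex^'n) set"
  assumes "f \<in> squeeze_maps p \<Omega>" "ball 0 r \<subseteq> f ` \<Omega>" "r > 0"
  shows "r \<le> squeezing_function \<Omega> p"
  unfolding squeezing_function_def
proof (rule cSup_upper)
  show "r \<in> {r. r > 0 \<and> (\<exists>f\<in>squeeze_maps p \<Omega>. ball 0 r \<subseteq> f ` \<Omega>)}" using assms by blast
  show "bdd_above {r. r > 0 \<and> (\<exists>f\<in>squeeze_maps p \<Omega>. ball 0 r \<subseteq> f ` \<Omega>)}"
  proof (rule bdd_aboveI, clarify)
    fix r' f' assume "f' \<in> squeeze_maps p \<Omega>" "ball 0 r' \<subseteq> f' ` \<Omega>"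
    hence sub: "ball 0 r' \<subseteq> ball (0::complex^'n) 1" unfolding squeeze_maps_def by blast
    obtain x :: "complex^'n" where "norm x = 1" using vector_choose_size[of 1] by auto
    thus "r' \<le> 1" using subsetD[OF sub, of x] by force
  qed
qed

lemma HHR_if_uniformly_squeezing:
  fixes \<Omega> :: "(complex^'n) set"
  assumes "\<Omega> \<noteq> {}" "r > 0" "\<And>p. p \<in> \<Omega> \<Longrightarrow> \<exists>f\<in>squeeze_maps p \<Omega>. ball 0 r \<subseteq> f ` \<Omega>"
  shows "HHR \<Omega>"
proof -
  have "r \<le> squeezing_function \<Omega> p" if "p \<in> \<Omega>" for p
    using assms(3)[OF that] assms(2) squeezing_function_ge by blast
  hence "r \<le> squeezing_constant \<Omega>"
    unfolding squeezing_constant_def using assms(1) by (intro cInf_greatest) auto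
  thus ?thesis unfolding HHR_def using assms(2) by simp
qed

theorem theorem2p1:
  fixes \<Omega> :: "(complex^'n) set"
  assumes "domain \<Omega>" and "convex \<Omega>" and "kobayashi_hyperbolic \<Omega>"
  shows "HHR \<Omega>"
proof (rule HHR_if_uniformly_squeezing)
  show "\<Omega> \<noteq> {}" using assms(1) by (simp add: domain_def)
  show "1 / (2 * real CARD('n) * 2 ^ CARD('n)) / (4 * sqrt CARD('n)) > 0" by simp
  show "\<exists>f\<in>squeeze_maps p \<Omega>. ball 0 (1 / (2 * real CARD('n) * 2 ^ CARD('n)) / (4 * sqrt CARD('n))) \<subseteq> f ` \<Omega>"
    if "p \<in> \<Omega>" for p
    using convex_hyperbolic_uniform_squeeze[OF _ assms(2,3) that] assms(1) by (simp add: domain_def)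
qed

end
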